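(* Let an operational theory contain two binary-outcome measurements, a which-way measurement $Z$ and a which-phase measurement $X$, each with outcomes in $\{+1,-1\}$, and suppose the theory has $A_1^2$-symmetry relative to $Z$ and $X$. For a state $\vec{s}$, define the path distinguishability $\mathcal{P}(\vec{s}) = |\langle Z\rangle_{\vec{s}}| = |\mathbb{P}(+1|Z,\vec{s})-\mathbb{P}(-1|Z,\vec{s})|$ and the fringe visibility $\mathcal{V}(\vec{s}) = |\langle X\rangle_{\vec{s}}| = |\mathbb{P}(+1|X,\vec{s})-\mathbb{P}(-1|X,\vec{s})|$. If the operational theory admits a (generalized-)noncontextual ontological model, then every state $\vec{s}$ of the theory satisfies $$\mathcal{V}(\vec{s}) + \mathcal{P}(\vec{s}) \le 1.$$
   Context: An operational theory (for a single system, prepare-measure scenario) specifies a set of preparations $P$, measurements $M$, and probabilities $\mathbb{P}(y|M,P)$ of outcome $y$ of $M$ given $P$. In the generalized-probabilistic-theory representation each preparation is represented by a real vector $\vec{s}_P$ (its "operational state") and each effect $[y|M]$ by a real vector $\vec{e}_{y|M}$ with $\mathbb{P}(y|M,P)=\vec{s}_P\cdot\vec{e}_{y|M}$; two preparations are operationally equivalent iff they give identical statistics for all measurements, i.e. iff they have the same vector. The set of operational states is assumed closed under convex mixtures. For a measurement $M$ with outcomes in $\{+1,-1\}$, $\langle M\rangle_{\vec{s}} = \mathbb{P}(+1|M,\vec{s})-\mathbb{P}(-1|M,\vec{s})$, and $|\langle M\rangle_{\vec{s}}|$ is called the $M$-predictability. An ontological model assigns a (finite) set $\Lambda$, to each preparation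 $P$ a probability distribution $\mu(\lambda|P)$ on $\Lambda$, and to each measurement $M$ a conditional distribution $\xi(y|M,\lambda)$, such that $\mathbb{P}(y|M,P)=\sum_{\lambda}\xi(y|M,\lambda)\mu(\lambda|P)$. It is (generalized, preparation-)noncontextual if operationally equivalent preparations are assigned the same distribution; in particular, if $\sum_i w_i\vec{s}_i=\sum_j w'_j\vec{s}'_j$ for probability weights $w,w'$, then $\sum_i w_i\mu(\cdot|P_i)=\sum_j w'_j\mu(\cdot|P'_j)$. A state $\vec{s}_1$ satisfies the $A_1^2$-orbit-realizability condition relative to measurements $M,M'$ (outcomes $\pm1$) if there exist operational states $\vec{s}_2,\vec{s}_3,\vec{s}_4$ in the theory such that $\langle M\rangle_{\vec{s}_1}=\langle M\rangle_{\vec{s}_2}=-\langle M\rangle_{\vec{s}_3}=-\langle M\rangle_{\vec{s}_4}$, $\langle M'\rangle_{\vec{s}_1}=-\langle M'\rangle_{\vec{s}_2}=-\langle M'\rangle_{\vec{s}_3}=\langle M'\rangle_{\vec{s}_4}$, and $\tfrac12\vec{s}_1+\tfrac12\vec{s}_3=\tfrac12\vec{s}_2+\tfrac12\vec{s}_4$. The theory has $A_1^2$-symmetry relative to $M,M'$ if every operational state satisfies this condition. *)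

theory Defs
  imports "HOL-Analysis.Analysis"
begin

text \<open>A binary-outcome measurement M with outcomes +1,-1 is given by
  its effect map  e :: int => 'a  (only the values e 1 and e (-1) matter), and
  P(y|M,s) = s \<bullet> e y.\<close>

definition prob :: "(int \<Rightarrow> 'a::euclidean_space) \<Rightarrow> int \<Rightarrow> 'a \<Rightarrow> real" where
  "prob e y s = s \<bullet> e y"

definition expval :: "(int \<Rightarrow> 'a::euclidean_space) \<Rightarrow> 'a \<Rightarrow> real" where
  "expval e s = prob e 1 s - prob e (-1) s"

definition operational_theory ::
  "'a::euclidean_space set \<Rightarrow> (int \<Rightarrow> 'a) \<Rightarrow> (int \<Rightarrow> 'a) \<Rightarrow> bool" where
  "operational_theory S eM eM' \<longleftrightarrow>
     convex S \<and>
     (\<forall>s\<in>S. \<forall>e\<in>{eM, eM'}.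
        prob e 1 s \<ge> 0 \<and> prob e (-1) s \<ge> 0 \<and> prob e 1 s + prob e (-1) s = 1)"

definition A12_orbit_realizable ::
  "'a::euclidean_space set \<Rightarrow> (int \<Rightarrow> 'a) \<Rightarrow> (int \<Rightarrow> 'a) \<Rightarrow> 'a \<Rightarrow> bool" where
  "A12_orbit_realizable S eM eM' s1 \<longleftrightarrow>
     (\<exists>s2\<in>S. \<exists>s3\<in>S. \<exists>s4\<in>S.
        expval eM s1 = expval eM s2 \<and> expval eM s2 = - expval eM s3 \<and>
        - expval eM s3 = - expval eM s4 \<and>
        expval eM' s1 = - expval eM' s2 \<and> - expval eM' s2 = - expval eM' s3 \<and>
        - expval eM' s3 = expval eM' s4 \<and>
        (1/2) *\<^sub>R s1 + (1/2) *\<^sub>R s3 = (1/2) *\<^sub>R s2 + (1/2) *\<^sub>R s4)"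

definition A12_symmetric ::
  "'a::euclidean_space set \<Rightarrow> (int \<Rightarrow> 'a) \<Rightarrow> (int \<Rightarrow> 'a) \<Rightarrow> bool" where
  "A12_symmetric S eM eM' \<longleftrightarrow> (\<forall>s\<in>S. A12_orbit_realizable S eM eM' s)"

text \<open>Ontological model with finite ontic state space (the finite type 'l).
  mu s is the distribution assigned to (preparations with operational state) s;
  xiM y lam is the response function xi(y|M,lam) for outcomes y in {+1,-1}.\<close>
definition ontological_model ::
  "'a::euclidean_space set \<Rightarrow> (int \<Rightarrow> 'a) \<Rightarrow> (int \<Rightarrow> 'a) \<Rightarrow>
   ('a \<Rightarrow> 'l::finite \<Rightarrow> real) \<Rightarrow> (int \<Rightarrow> 'l \<Rightarrow> real) \<Rightarrow> (int \<Rightarrow> 'l \<Rightarrow> real) \<Rightarrow> bool" where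
  "ontological_model S eM eM' mu xiM xiM' \<longleftrightarrow>
     (\<forall>s\<in>S. (\<forall>l. mu s l \<ge> 0) \<and> (\<Sum>l\<in>UNIV. mu s l) = 1) \<and>
     (\<forall>xi\<in>{xiM, xiM'}. \<forall>l. xi 1 l \<ge> 0 \<and> xi (-1) l \<ge> 0 \<and> xi 1 l + xi (-1) l = 1) \<and>
     (\<forall>s\<in>S. \<forall>y\<in>{1, -1}.
        prob eM y s = (\<Sum>l\<in>UNIV. xiM y l * mu s l) \<and>
        prob eM' y s = (\<Sum>l\<in>UNIV. xiM' y l * mu s l))"

definition prep_noncontextual ::
  "'a::euclidean_space set \<Rightarrow> ('a \<Rightarrow> 'l \<Rightarrow> real) \<Rightarrow> bool" where
  "prep_noncontextual S mu \<longleftrightarrow>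
     (\<forall>(I::nat set) (w::nat \<Rightarrow> real) (s::nat \<Rightarrow> 'a) (J::nat set) (w'::nat \<Rightarrow> real) (s'::nat \<Rightarrow> 'a).
        finite I \<and> finite J \<and>
        (\<forall>i\<in>I. w i \<ge> 0 \<and> s i \<in> S) \<and> sum w I = 1 \<and>
        (\<forall>j\<in>J. w' j \<ge> 0 \<and> s' j \<in> S) \<and> sum w' J = 1 \<and>
        (\<Sum>i\<in>I. w i *\<^sub>R s i) = (\<Sum>j\<in>J. w' j *\<^sub>R s' j)
        \<longrightarrow> (\<forall>l. (\<Sum>i\<in>I. w i * mu (s i) l) = (\<Sum>j\<in>J. w' j * mu (s' j) l)))"

end

theory Submission
  imports Defs
begin

text \<open>In the A_1^2 orbit of s, the states s4 and s2 flip the sign of exactly one of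
  the two expectation values, so in the ontological model the Z-predictability of s is
  bounded by half the l1-distance between mu s and mu s4, and the X-predictability by
  half the l1-distance between mu s and mu s2.  Noncontextuality applied to
  s + s3 = s2 + s4 yields mu s + mu s3 = mu s2 + mu s4 pointwise, and under this
  constraint the two pointwise distances add up to at most mu s + mu s3, whose total
  mass is 2.\<close>

definition ontic_expval :: "(int \<Rightarrow> 'l \<Rightarrow> real) \<Rightarrow> 'l \<Rightarrow> real" where
  "ontic_expval xi l = xi 1 l - xi (-1) l"

lemma ontological_model_swap:
  "ontological_model S eM eM' mu xiM xiM' \<longleftrightarrow> ontological_model S eM' eM mu xiM' xiM"
  unfolding ontological_model_def by blast

lemma expval_ontological:
  assumes "ontological_model S eM eM' mu xiM xiM'" and "t \<in> S"
  shows "expval eM t = (\<Sum>l\<in>UNIV. ontic_expval xiM l * mu t l)"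
proof -
  have "prob eM 1 t = (\<Sum>l\<in>UNIV. xiM 1 l * mu t l)"
    and "prob eM (-1) t = (\<Sum>l\<in>UNIV. xiM (-1) l * mu t l)"
    using assms unfolding ontological_model_def by auto
  then show ?thesis
    unfolding expval_def ontic_expval_def by (simp add: sum_subtractf left_diff_distrib)
qed

lemma abs_ontic_expval_le_one:
  assumes "ontological_model S eM eM' mu xiM xiM'"
  shows "\<bar>ontic_expval xiM l\<bar> \<le> 1"
proof -
  have "xiM 1 l \<ge> 0" "xiM (-1) l \<ge> 0" "xiM 1 l + xiM (-1) l = 1"
    using assms unfolding ontological_model_def by auto
  then show ?thesis unfolding ontic_expval_def by linarith
qed

lemma prep_noncontextual_balanced_mixture:
  assumes "prep_noncontextual S mu"
    and "s1 \<in> S" "s2 \<in> S" "s3 \<in> S" "s4 \<in> S"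
    and "(1/2) *\<^sub>R s1 + (1/2) *\<^sub>R s3 = (1/2) *\<^sub>R s2 + (1/2) *\<^sub>R s4"
  shows "mu s1 l + mu s3 l = mu s2 l + mu s4 l"
proof -
  define w :: "nat \<Rightarrow> real" where "w = (\<lambda>_. 1/2)"
  define f where "f = (\<lambda>i::nat. if i = 0 then s1 else s3)"
  define g where "g = (\<lambda>i::nat. if i = 0 then s2 else s4)"
  have "(\<Sum>i\<in>{0,1}. w i * mu (f i) l) = (\<Sum>j\<in>{0,1}. w j * mu (g j) l)"
    using assms(1)[unfolded prep_noncontextual_def, rule_format,
        where I = "{0,1}" and w = w and s = f and J = "{0,1}" and w' = w and s' = g] assms(2-6)
    by (simp add: w_def f_def g_def)
  then show ?thesis by (simp add: w_def f_def g_def)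
qed

lemma abs_le_half_sum_abs_diff:
  fixes r p q :: "'l \<Rightarrow> real"
  assumes "\<And>l. \<bar>r l\<bar> \<le> 1"
    and "x = (\<Sum>l\<in>A. r l * p l)" and "- x = (\<Sum>l\<in>A. r l * q l)"
  shows "\<bar>x\<bar> \<le> (\<Sum>l\<in>A. \<bar>p l - q l\<bar>) / 2"
proof -
  have "2 * \<bar>x\<bar> = \<bar>2 * x\<bar>"
    by simp
  also have "\<dots> = \<bar>\<Sum>l\<in>A. r l * (p l - q l)\<bar>"
    using assms(2,3) by (simp add: right_diff_distrib sum_subtractf)
  also have "\<dots> \<le> (\<Sum>l\<in>A. \<bar>r l * (p l - q l)\<bar>)"
    by (rule sum_abs)
  also have "\<dots> \<le> (\<Sum>l\<in>A. \<bar>p l - q l\<bar>)"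
    by (rule sum_mono) (simp add: abs_mult assms(1) mult_left_le_one_le)
  finally show ?thesis by simp
qed

lemma abs_diff_add_abs_diff_le:
  fixes p1 p2 p3 p4 :: real
  assumes "p1 \<ge> 0" "p2 \<ge> 0" "p3 \<ge> 0" "p4 \<ge> 0" "p1 + p3 = p2 + p4"
  shows "\<bar>p1 - p4\<bar> + \<bar>p1 - p2\<bar> \<le> p1 + p3"
  using assms by (simp add: abs_if)

theorem corollary1:
  fixes S :: "'a::euclidean_space set"
    and eZ eX :: "int \<Rightarrow> 'a"
    and mu :: "'a \<Rightarrow> 'l::finite \<Rightarrow> real"
    and xiZ xiX :: "int \<Rightarrow> 'l \<Rightarrow> real"
    and s :: 'a
  assumes "operational_theory S eZ eX"
    and "A12_symmetric S eZ eX"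
    and "ontological_model S eZ eX mu xiZ xiX"
    and "prep_noncontextual S mu"
    and "s \<in> S"
  shows "\<bar>expval eX s\<bar> + \<bar>expval eZ s\<bar> \<le> 1"
proof -
  obtain s2 s3 s4 where S: "s2 \<in> S" "s3 \<in> S" "s4 \<in> S"
    and Z: "expval eZ s = expval eZ s2" "expval eZ s2 = - expval eZ s3"
      "- expval eZ s3 = - expval eZ s4"
    and X: "expval eX s = - expval eX s2" "- expval eX s2 = - expval eX s3"
      "- expval eX s3 = expval eX s4"
    and mix: "(1/2) *\<^sub>R s + (1/2) *\<^sub>R s3 = (1/2) *\<^sub>R s2 + (1/2) *\<^sub>R s4"
    using assms(2,5) unfolding A12_symmetric_def A12_orbit_realizable_def by blast
  have Z4: "expval eZ s4 = - expval eZ s" and X2: "expval eX s2 = - expval eX s"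
    using Z X by linarith+
  note model = assms(3) ontological_model_swap[THEN iffD1, OF assms(3)]
  have dZ: "\<bar>expval eZ s\<bar> \<le> (\<Sum>l\<in>UNIV. \<bar>mu s l - mu s4 l\<bar>) / 2"
    using abs_ontic_expval_le_one[OF model(1)] expval_ontological[OF model(1) assms(5)]
      expval_ontological[OF model(1) S(3), unfolded Z4]
    by (rule abs_le_half_sum_abs_diff)
  have dX: "\<bar>expval eX s\<bar> \<le> (\<Sum>l\<in>UNIV. \<bar>mu s l - mu s2 l\<bar>) / 2"
    using abs_ontic_expval_le_one[OF model(2)] expval_ontological[OF model(2) assms(5)]
      expval_ontological[OF model(2) S(1), unfolded X2]
    by (rule abs_le_half_sum_abs_diff)
  have distr: "\<And>l. mu t l \<ge> 0" "(\<Sum>l\<in>UNIV. mu t l) = 1" if "t \<in> S" for t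
    using assms(3) that unfolding ontological_model_def by blast+
  have "(\<Sum>l\<in>UNIV. \<bar>mu s l - mu s4 l\<bar>) + (\<Sum>l\<in>UNIV. \<bar>mu s l - mu s2 l\<bar>)
      \<le> (\<Sum>l\<in>UNIV. mu s l + mu s3 l)"
    unfolding sum.distrib[symmetric]
    by (rule sum_mono, rule abs_diff_add_abs_diff_le)
      (simp_all add: distr assms(5) S prep_noncontextual_balanced_mixture[OF assms(4,5) S(1-3) mix])
  also have "\<dots> = 2"
    using distr(2)[OF assms(5)] distr(2)[OF S(2)] by (simp add: sum.distrib)
  finally show ?thesis using dZ dX by linarith
qed

end
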